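(* Let $F=\{p_0,\ldots,p_n\}\subset\mathbb{R}$ contain at least two distinct points, let $k\ge1$, and consider the homogeneous IFS $S_i(x)=\lambda x+(1-\lambda)p_i$, $i=0,\ldots,n$. Then for every $\lambda\in\big(\max\{(\tfrac12)^{1/(k(n+1)^k)},\theta^{-1/2}\},1\big)$, where $\theta=1.3247\ldots$ is the smallest Pisot number (the real root of $x^3-x-1$), we have $X_k=\mathrm{int}(X)$.
   Context: $\mathcal{D}=\{0,\ldots,n\}$. $X\subset\mathbb{R}$ is the unique non-empty compact set with $X=\bigcup_{i\in\mathcal{D}}S_i(X)$. The coding map is $\pi(\mathbf{a})=\lim_{j\to\infty}(S_{a_1}\circ\cdots\circ S_{a_j})(0)$. For $\mathbf{b}\in\mathcal{D}^k$, $\mathrm{freq}_{\mathbf{b}}(\mathbf{a})=\lim_{m\to\infty}\frac1m\#\{1\le j\le m:a_j\cdots a_{j+k-1}=\mathbf{b}\}$; $\mathbf{a}$ is $k$-simply normal if this equals $(n+1)^{-k}$ for all $\mathbf{b}\in\mathcal{D}^k$. $X_k$ is the set of $x\in X$ having a $k$-simply normal $\mathbf{a}$ with $\pi(\mathbf{a})=x$. *)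

theory Defs
  imports "HOL-Analysis.Analysis"
begin

definition hIFS :: "real \<Rightarrow> (nat \<Rightarrow> real) \<Rightarrow> nat \<Rightarrow> real \<Rightarrow> real" where
  "hIFS lam p i x = lam * x + (1 - lam) * p i"

definition attractor :: "(nat \<Rightarrow> real \<Rightarrow> real) \<Rightarrow> nat \<Rightarrow> real set" where
  "attractor S n = (THE X. compact X \<and> X \<noteq> {} \<and> X = (\<Union>i\<in>{0..n}. S i ` X))"

text \<open>Composition S_{a_1} o ... o S_{a_j}; sequences are indexed from 0 here,
  so a 0 plays the role of a_1.\<close>
fun comp_word :: "(nat \<Rightarrow> real \<Rightarrow> real) \<Rightarrow> (nat \<Rightarrow> nat) \<Rightarrow> nat \<Rightarrow> real \<Rightarrow> real" where
  "comp_word S a 0 = id"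
| "comp_word S a (Suc j) = comp_word S a j \<circ> S (a j)"

definition coding :: "(nat \<Rightarrow> real \<Rightarrow> real) \<Rightarrow> (nat \<Rightarrow> nat) \<Rightarrow> real" where
  "coding S a = lim (\<lambda>j. comp_word S a j 0)"

definition block_count :: "nat list \<Rightarrow> (nat \<Rightarrow> nat) \<Rightarrow> nat \<Rightarrow> nat" where
  "block_count b a m = card {j. j < m \<and> (\<forall>i<length b. a (j + i) = b ! i)}"

definition simply_normal :: "nat \<Rightarrow> nat \<Rightarrow> (nat \<Rightarrow> nat) \<Rightarrow> bool" where
  "simply_normal n k a \<longleftrightarrow>
     (\<forall>b. length b = k \<and> set b \<subseteq> {0..n} \<longrightarrow>
        (\<lambda>m. real (block_count b a m) / real m) \<longlonglongrightarrow> 1 / real (n + 1) ^ k)"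

definition Xk :: "(nat \<Rightarrow> real \<Rightarrow> real) \<Rightarrow> nat \<Rightarrow> nat \<Rightarrow> real set" where
  "Xk S n k = {x \<in> attractor S n. \<exists>a. (\<forall>j. a j \<le> n) \<and> simply_normal n k a \<and> coding S a = x}"

definition pisot_theta :: real where
  "pisot_theta = (THE x::real. x ^ 3 - x - 1 = 0)"

end

theory Submission
  imports Defs
begin

(*
  Let m and M be the least and the largest of the points p i, attained at the digits i0 and i1.
  Since lam > 1/2, the two maps S i0 and S i1 already cover [m, M], so X = [m, M]; and a coding
  that uses both digits i0 and i1, as every simply normal one does, lies strictly between m and M.

  Conversely, let q = n + 1 and L = k * q^k. Writing down the base-q expansions (k digits each) of
  0, ..., q^k - 1 one after the other gives a word of length L in which, read cyclically, every
  block of length k occurs exactly k times; after relabelling it starts with k copies of i0. The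
  compositions of the S i along this word and along its shift by one letter are contractions of
  ratio r = lam^L, and the bound (1/2) powr (1 / L) < lam says exactly that r > 1/2. Hence the two maps cover
  the interval between their fixed points, so every point of that interval is coded by a sequence
  of blocks, each the word or its shift, and such a sequence is k-simply normal even after any
  finite prefix. As the fixed point of the unshifted word is the image under S i0 of the other one,
  powers of S i0 and then of S i1 carry that interval onto all of (m, M).
*)

section \<open>Base-q digits and a balanced periodic word\<close>

definition digit :: "nat \<Rightarrow> nat \<Rightarrow> nat \<Rightarrow> nat" where
  "digit q x t = x div q ^ t mod q"

lemma digit_mod_power:
  assumes "0 < q" "t < e"
  shows "digit q (x mod q ^ e) t = digit q x t"
proof -
  have "q ^ e = q ^ t * q ^ (e - t)"
    using assms by (simp flip: power_add)
  then have "x mod q ^ e div q ^ t = x div q ^ t mod q ^ (e - t)"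
    using assms by (simp add: mod_mult2_eq)
  moreover have "q dvd q ^ (e - t)"
    using assms by simp
  ultimately show ?thesis
    by (simp add: digit_def mod_mod_cancel)
qed

lemma digit_div_power: "digit q (x div q ^ s) t = digit q x (s + t)"
  by (simp add: digit_def div_mult2_eq power_add)

lemma digit_add_mult_power_low:
  assumes "0 < q" "t < s"
  shows "digit q (a + b * q ^ s) t = digit q a t"
  using digit_mod_power[OF assms, of "a + b * q ^ s"] digit_mod_power[OF assms, of a] by simp

lemma digit_add_mult_power_high:
  assumes "0 < q" "a < q ^ s"
  shows "digit q (a + b * q ^ s) (s + t) = digit q b t"
  using assms by (simp flip: digit_div_power)

lemma mod_power_eq_digit_sum: "x mod q ^ k = (\<Sum>t<k. digit q x t * q ^ t)"
proof (induction k)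
  case (Suc k)
  have "x mod q ^ Suc k = q ^ k * digit q x k + x mod q ^ k"
    unfolding power_Suc2 digit_def by (rule mod_mult2_eq)
  then show ?case
    using Suc by (simp add: mult.commute)
qed simp

lemma digits_eq_imp_eq:
  assumes "x < q ^ k" "y < q ^ k" "\<forall>t<k. digit q x t = digit q y t"
  shows "x = y"
proof -
  have "x = (\<Sum>t<k. digit q x t * q ^ t)"
    using assms(1) by (simp flip: mod_power_eq_digit_sum)
  also have "\<dots> = (\<Sum>t<k. digit q y t * q ^ t)"
    using assms(3) by (intro sum.cong) auto
  also have "\<dots> = y"
    using assms(2) by (simp flip: mod_power_eq_digit_sum)
  finally show ?thesis .
qed

lemma exists_digits:
  assumes "0 < q" "\<forall>t<k. c t < q"
  shows "\<exists>x<q ^ k. \<forall>t<k. digit q x t = c t"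
  using assms(2)
proof (induction k)
  case (Suc k)
  then obtain x where x: "x < q ^ k" "\<forall>t<k. digit q x t = c t"
    by auto
  have "x + c k * q ^ k < (c k + 1) * q ^ k"
    using x(1) by (simp add: algebra_simps)
  also have "\<dots> \<le> q * q ^ k"
    using Suc.prems by (intro mult_right_mono) auto
  finally have "x + c k * q ^ k < q ^ Suc k"
    by simp
  moreover have "digit q (x + c k * q ^ k) t = c t" if "t < Suc k" for t
  proof (cases "t < k")
    case True
    then show ?thesis
      using x digit_add_mult_power_low[OF assms(1)] by simp
  next
    case False
    then have "t = k"
      using that by simp
    have "digit q (x + c k * q ^ k) (k + 0) = digit q (c k) 0"
      by (rule digit_add_mult_power_high[OF assms(1) x(1)])
    also have "\<dots> = c k"
      using Suc.prems by (simp add: digit_def)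
    finally show ?thesis
      using \<open>t = k\<close> by simp
  qed
  ultimately show ?case
    by blast
qed simp

lemma card_digits_eq:
  assumes "0 < q" "\<forall>t<k. c t < q"
  shows "card {x. x < q ^ k \<and> (\<forall>t<k. digit q x t = c t)} = 1"
proof -
  obtain x where x: "x < q ^ k" "\<forall>t<k. digit q x t = c t"
    using exists_digits[OF assms] by blast
  have "{x. x < q ^ k \<and> (\<forall>t<k. digit q x t = c t)} = {x}"
  proof (intro set_eqI iffI)
    fix y
    assume "y \<in> {x. x < q ^ k \<and> (\<forall>t<k. digit q x t = c t)}"
    then show "y \<in> {x}"
      using digits_eq_imp_eq[of y q k x] x by simp
  qed (use x in simp)
  then show ?thesis
    by simp
qed

(* Position i * k + t of each period holds the t-th base-q digit of i: a period lists the base-q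
   expansions of 0, ..., q^k - 1, least significant digit first. *)
definition balanced_word :: "nat \<Rightarrow> nat \<Rightarrow> nat \<Rightarrow> nat" where
  "balanced_word q k x = digit q (x div k mod q ^ k) (x mod k)"

(* The number whose base-q digits are the k letters of balanced_word from position i * k + j on:
   digits j, ..., k - 1 of i followed by digits 0, ..., j - 1 of i + 1. *)
definition window_code :: "nat \<Rightarrow> nat \<Rightarrow> nat \<Rightarrow> nat \<Rightarrow> nat" where
  "window_code q k j i = i div q ^ j + (i + 1) mod q ^ j * q ^ (k - j)"

lemma balanced_word_periodic: "balanced_word q k (x + k * q ^ k) = balanced_word q k x"
  by (cases "k = 0") (simp_all add: balanced_word_def)

lemma balanced_word_window:
  assumes q: "0 < q" and i: "i < q ^ k" and j: "j < k" and t: "t < k"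
  shows "balanced_word q k (i * k + j + t) = digit q (window_code q k j i) t"
proof (cases "j + t < k")
  case True
  have "balanced_word q k (i * k + j + t) = digit q i (j + t)"
    using True i by (simp add: balanced_word_def add.assoc)
  also have "\<dots> = digit q (i div q ^ j) t"
    by (simp add: digit_div_power)
  also have "\<dots> = digit q (window_code q k j i) t"
    unfolding window_code_def using True q by (simp add: digit_add_mult_power_low)
  finally show ?thesis .
next
  case False
  define t' where "t' = j + t - k"
  have t': "t' < j" "t = (k - j) + t'"
    using False j t by (simp_all add: t'_def)
  have "i * k + j + t = (i + 1) * k + t'"
    using False by (simp add: t'_def)
  then have "balanced_word q k (i * k + j + t) = digit q ((i + 1) mod q ^ k) t'"
    using t' j by (simp add: balanced_word_def)
  also have "\<dots> = digit q ((i + 1) mod q ^ j) t'"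
    using t' j q by (simp add: digit_mod_power)
  also have "\<dots> = digit q (window_code q k j i) t"
  proof -
    have "i < q ^ (k - j) * q ^ j"
      using i j by (simp flip: power_add)
    then have "i div q ^ j < q ^ (k - j)"
      by (rule less_mult_imp_div_less)
    then show ?thesis
      unfolding window_code_def t'(2) using q by (simp only: digit_add_mult_power_high)
  qed
  finally show ?thesis .
qed

lemma window_code_bij:
  assumes "0 < q" "j \<le> k"
  shows "bij_betw (window_code q k j) {..<q ^ k} {..<q ^ k}"
proof -
  define a b where "a = q ^ j" and "b = q ^ (k - j)"
  have ab: "q ^ k = a * b" "0 < a" "0 < b"
    using assms by (simp_all add: a_def b_def flip: power_add)
  have code: "window_code q k j i = i div a + (i + 1) mod a * b" for i
    by (simp add: window_code_def a_def b_def)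
  have low: "i div a < b" if "i < q ^ k" for i
    using that ab by (simp add: less_mult_imp_div_less mult.commute)
  have maps: "window_code q k j i < q ^ k" if "i < q ^ k" for i
  proof -
    have "(i + 1) mod a + 1 \<le> a"
      using ab by (simp add: Suc_leI)
    then have "((i + 1) mod a + 1) * b \<le> a * b"
      by (rule mult_right_mono) simp
    then show ?thesis
      using low[OF that] ab by (simp add: code algebra_simps)
  qed
  have "inj_on (window_code q k j) {..<q ^ k}"
  proof (rule inj_onI)
    fix i i'
    assume i: "i \<in> {..<q ^ k}" and i': "i' \<in> {..<q ^ k}"
      and eq: "window_code q k j i = window_code q k j i'"
    have "i div a = i' div a"
      using arg_cong[OF eq, of "\<lambda>v. v mod b"] low i i' by (simp add: code)
    moreover have "(i + 1) mod a = (i' + 1) mod a"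
      using arg_cong[OF eq, of "\<lambda>v. v div b"] low i i' ab by (simp add: code)
    then have "i mod a = i' mod a"
      using nat_mod_eq_iff by force
    ultimately show "i = i'"
      by (metis div_mult_mod_eq)
  qed
  moreover have "window_code q k j ` {..<q ^ k} \<subseteq> {..<q ^ k}"
    using maps by auto
  ultimately show ?thesis
    by (simp add: bij_betw_def endo_inj_surj)
qed

theorem balanced_word_window_count:
  assumes q: "0 < q" and c: "\<forall>t<k. c t < q"
  shows "card {x. x < k * q ^ k \<and> (\<forall>t<k. balanced_word q k (x + t) = c t)} = k"
proof -
  define P where "P x \<longleftrightarrow> (\<forall>t<k. balanced_word q k (x + t) = c t)" for x
  have fiber: "card {i \<in> {..<q ^ k}. P (i * k + j)} = 1" if j: "j < k" for j
  proof -
    let ?D = "{v \<in> {..<q ^ k}. \<forall>t<k. digit q v t = c t}"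
    have bij: "bij_betw (window_code q k j) {..<q ^ k} {..<q ^ k}"
      using window_code_bij q j by simp
    have "bij_betw (window_code q k j) {i \<in> {..<q ^ k}. P (i * k + j)} ?D"
      by (rule bij_betw_Collect[OF bij]) (simp add: P_def balanced_word_window[OF q _ j])
    then show ?thesis
      using card_digits_eq[OF q c] by (simp add: bij_betw_same_card)
  qed
  have "card {x. x < k * q ^ k \<and> P x} = (\<Sum>x<q ^ k * k. of_bool (P x))"
    by (simp add: mult.commute Collect_conj_eq lessThan_def Int_commute)
  also have "\<dots> = (\<Sum>i<q ^ k. \<Sum>x\<in>{i * k..<i * k + k}. of_bool (P x))"
    by (rule sum.nat_group[symmetric])
  also have "\<dots> = (\<Sum>i<q ^ k. \<Sum>j<k. of_bool (P (i * k + j)))"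
    by (simp add: sum.shift_bounds_nat_ivl[of _ 0 "i * k" k for i, simplified] atLeast0LessThan add.commute)
  also have "\<dots> = (\<Sum>j<k. \<Sum>i<q ^ k. of_bool (P (i * k + j)))"
    by (rule sum.swap)
  also have "\<dots> = k"
    using fiber by (simp add: Int_def)
  finally show ?thesis
    by (simp add: P_def)
qed

section \<open>Densities of periodic patterns\<close>

lemma card_periodic_shift:
  fixes L e :: nat
  assumes "\<forall>x. P (x + L) = P x"
  shows "card {s. s < L \<and> P (s + e)} = card {s. s < L \<and> P s}"
proof (induction e)
  case (Suc e)
  define f :: "nat \<Rightarrow> nat" where "f s = of_bool (P (s + e))" for s
  have "f 0 + (\<Sum>s<L. f (Suc s)) = (\<Sum>s<L. f s) + f L"
    by (simp flip: sum.lessThan_Suc_shift)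
  moreover have "P (L + e) = P e"
    using assms by (metis add.commute)
  then have "f L = f 0"
    by (simp add: f_def)
  ultimately have "(\<Sum>s<L. f (Suc s)) = (\<Sum>s<L. f s)"
    by simp
  then show ?case
    using Suc by (simp add: f_def Int_def)
qed simp

lemma sum_lessThan_add:
  fixes f :: "nat \<Rightarrow> 'a::comm_monoid_add"
  shows "(\<Sum>j<a + b. f j) = (\<Sum>j<a. f j) + (\<Sum>s<b. f (a + s))"
  by (induction b) (simp_all add: add.assoc)

lemma card_less_periodic_blocks:
  assumes "\<forall>t. card {s. s < L \<and> W (N0 + t * L + s)} = c"
  shows "card {j. j < N0 + t * L \<and> W j} = card {j. j < N0 \<and> W j} + c * t"
proof (induction t)
  case (Suc t)
  have "(\<Sum>j<N0 + t * L + L. of_bool (W j)) = 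
      (\<Sum>j<N0 + t * L. of_bool (W j)) + (\<Sum>s<L. of_bool (W (N0 + t * L + s)) :: nat)"
    by (rule sum_lessThan_add)
  then show ?case
    using Suc assms[rule_format, of t] by (simp add: Int_def algebra_simps)
qed simp

lemma density_of_periodic_counts:
  fixes W :: "nat \<Rightarrow> bool"
  assumes L: "0 < L" and blocks: "\<forall>t. card {s. s < L \<and> W (N0 + t * L + s)} = c"
  shows "(\<lambda>m. real (card {j. j < m \<and> W j}) / real m) \<longlonglongrightarrow> real c / real L"
proof -
  define cnt where "cnt m = card {j. j < m \<and> W j}" for m
  define B where "B = real (L * cnt N0 + c * N0 + c * L)"
  have mono: "cnt m \<le> cnt m'" if "m \<le> m'" for m m'
    unfolding cnt_def using that by (intro card_mono) auto
  have bound: "\<bar>real L * real (cnt m) - real c * real m\<bar> \<le> B" if "N0 \<le> m" for m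
  proof -
    define t where "t = (m - N0) div L"
    have t: "N0 + t * L \<le> m" "m \<le> N0 + t * L + L"
      using that div_mult_mod_eq[of "m - N0" L] mod_less_divisor[OF L, of "m - N0"]
      unfolding t_def by linarith+
    have "cnt N0 + c * t \<le> cnt m" "cnt m \<le> cnt N0 + c * t + c"
      using mono[OF t(1)] mono[OF t(2)] card_less_periodic_blocks[OF blocks, of "Suc t"]
        card_less_periodic_blocks[OF blocks, of t]
      by (simp_all add: cnt_def algebra_simps)
    then have "L * cnt N0 + c * (t * L) \<le> L * cnt m" "L * cnt m \<le> L * cnt N0 + c * (t * L) + c * L"
      by (auto dest: mult_left_mono[of _ _ L] simp: algebra_simps)
    moreover have "c * N0 + c * (t * L) \<le> c * m" "c * m \<le> c * N0 + c * (t * L) + c * L"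
      using t by (auto dest: mult_left_mono[of _ _ c] simp: algebra_simps)
    ultimately have "real (L * cnt m) \<le> real (c * m) + B" "real (c * m) \<le> real (L * cnt m) + B"
      unfolding B_def by linarith+
    then show ?thesis
      by (simp add: abs_le_iff)
  qed
  have "(\<lambda>m. real (cnt m) / real m - real c / real L) \<longlonglongrightarrow> 0"
  proof (rule Lim_null_comparison)
    show "\<forall>\<^sub>F m in sequentially.
        norm (real (cnt m) / real m - real c / real L) \<le> B / real L * inverse (real m)"
    proof (rule eventually_sequentiallyI[of "Suc N0"])
      fix m
      assume m: "Suc N0 \<le> m"
      have "norm (real (cnt m) / real m - real c / real L)
          = \<bar>real L * real (cnt m) - real c * real m\<bar> / (real L * real m)"
        using m L by (simp add: field_simps abs_div)
      also have "\<dots> \<le> B / (real L * real m)"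
        using bound[of m] m L by (intro divide_right_mono) auto
      finally show "norm (real (cnt m) / real m - real c / real L) \<le> B / real L * inverse (real m)"
        by (simp add: field_simps)
    qed
    show "(\<lambda>m. B / real L * inverse (real m)) \<longlonglongrightarrow> 0"
      by (intro tendsto_mult_right_zero lim_inverse_n)
  qed
  then show ?thesis
    unfolding cnt_def by (rule LIM_zero_cancel)
qed

section \<open>Codings for a homogeneous IFS\<close>

lemma comp_word_add:
  "comp_word S a (N + K) = comp_word S a N \<circ> comp_word S (\<lambda>j. a (N + j)) K"
  by (induction K) (simp_all add: o_assoc)

lemma comp_word_cong: "\<forall>j<N. a j = b j \<Longrightarrow> comp_word S a N = comp_word S b N"
  by (induction N) auto

lemma comp_word_hIFS:
  "comp_word (hIFS lam p) a N y = lam ^ N * y + (\<Sum>j<N. (1 - lam) * lam ^ j * p (a j))"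
  by (induction N arbitrary: y) (simp_all add: hIFS_def algebra_simps)

lemma comp_word_hIFS_const: "comp_word (hIFS lam p) (\<lambda>_. d) N y = p d + lam ^ N * (y - p d)"
proof (induction N arbitrary: y)
  case (Suc N)
  show ?case
    by (simp only: comp_word.simps o_apply Suc.IH) (simp add: hIFS_def algebra_simps)
qed simp

lemma geometric_weights_sums:
  fixes lam :: real
  assumes "\<bar>lam\<bar> < 1"
  shows "(\<lambda>j. (1 - lam) * lam ^ j) sums 1"
proof -
  have "lam \<noteq> 1"
    using assms by auto
  then show ?thesis
    using sums_mult[OF geometric_sums[of lam], of "1 - lam"] assms by simp
qed

lemma coding_hIFS_sums:
  assumes "\<forall>j. a j \<le> n" "0 \<le> lam" "lam < 1"
  shows "(\<lambda>j. (1 - lam) * lam ^ j * p (a j)) sums coding (hIFS lam p) a"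
proof -
  define C where "C = (\<Sum>i\<le>n. \<bar>p i\<bar>)"
  have "norm ((1 - lam) * lam ^ j * p (a j)) \<le> C * ((1 - lam) * lam ^ j)" for j
  proof -
    have "norm ((1 - lam) * lam ^ j * p (a j)) = ((1 - lam) * lam ^ j) * \<bar>p (a j)\<bar>"
      using assms(2,3) by (simp add: abs_mult)
    also have "\<dots> \<le> ((1 - lam) * lam ^ j) * C"
      unfolding C_def using assms by (intro mult_left_mono member_le_sum) auto
    finally show ?thesis
      by (simp only: mult.commute)
  qed
  moreover have "summable (\<lambda>j. C * ((1 - lam) * lam ^ j))"
    using assms(2,3) by (intro summable_mult sums_summable[OF geometric_weights_sums]) auto
  ultimately have sum: "summable (\<lambda>j. (1 - lam) * lam ^ j * p (a j))"
    by (rule summable_comparison_test'[rotated])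
  then have "(\<lambda>N. comp_word (hIFS lam p) a N 0) \<longlonglongrightarrow> (\<Sum>j. (1 - lam) * lam ^ j * p (a j))"
    using summable_LIMSEQ[OF sum] by (simp add: comp_word_hIFS)
  then have "coding (hIFS lam p) a = (\<Sum>j. (1 - lam) * lam ^ j * p (a j))"
    unfolding coding_def by (rule limI)
  then show ?thesis
    using summable_sums[OF sum] by simp
qed

lemma comp_word_hIFS_tendsto_coding:
  assumes "\<forall>j. a j \<le> n" "0 \<le> lam" "lam < 1" and "strict_mono \<phi>" and "\<forall>t. \<bar>z t\<bar> \<le> C"
  shows "(\<lambda>t. comp_word (hIFS lam p) a (\<phi> t) (z t)) \<longlonglongrightarrow> coding (hIFS lam p) a"
proof -
  have "(\<lambda>N. lam ^ N) \<longlonglongrightarrow> 0"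
    using assms(2,3) by (intro LIMSEQ_power_zero) simp
  from LIMSEQ_subseq_LIMSEQ[OF this assms(4)] have "(\<lambda>t. lam ^ \<phi> t) \<longlonglongrightarrow> 0"
    by (simp add: o_def)
  then have C: "(\<lambda>t. lam ^ \<phi> t * C) \<longlonglongrightarrow> 0"
    by (rule tendsto_mult_left_zero)
  have bound: "norm (lam ^ \<phi> t * z t) \<le> lam ^ \<phi> t * C" for t
  proof -
    have "norm (lam ^ \<phi> t * z t) = lam ^ \<phi> t * \<bar>z t\<bar>"
      using assms(2) by (simp add: abs_mult)
    also have "\<dots> \<le> lam ^ \<phi> t * C"
      using assms(2,5) by (intro mult_left_mono) auto
    finally show ?thesis .
  qed
  have "(\<lambda>t. lam ^ \<phi> t * z t) \<longlonglongrightarrow> 0"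
    by (rule Lim_null_comparison[OF always_eventually C]) (use bound in blast)
  moreover have "(\<lambda>t. comp_word (hIFS lam p) a (\<phi> t) 0) \<longlonglongrightarrow> coding (hIFS lam p) a"
    using LIMSEQ_subseq_LIMSEQ[OF coding_hIFS_sums[OF assms(1-3), unfolded sums_def] assms(4)]
    by (simp add: o_def comp_word_hIFS)
  ultimately have "(\<lambda>t. lam ^ \<phi> t * z t + comp_word (hIFS lam p) a (\<phi> t) 0)
      \<longlonglongrightarrow> 0 + coding (hIFS lam p) a"
    by (rule tendsto_add)
  then show ?thesis
    by (simp add: comp_word_hIFS)
qed

lemma simply_normal_digit_occurs:
  assumes "simply_normal n k a" "0 < k" "d \<le> n"
  shows "\<exists>j. a j = d"
proof (rule ccontr)
  assume "\<nexists>j. a j = d"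
  then have "block_count (replicate k d) a m = 0" for m
    using \<open>0 < k\<close> by (auto simp: block_count_def)
  moreover have "length (replicate k d) = k \<and> set (replicate k d) \<subseteq> {0..n}"
    using assms(2,3) by simp
  then have "(\<lambda>m. real (block_count (replicate k d) a m) / real m) \<longlonglongrightarrow> 1 / real (n + 1) ^ k"
    using assms(1) unfolding simply_normal_def by blast
  ultimately have "(\<lambda>m. 0::real) \<longlonglongrightarrow> 1 / real (n + 1) ^ k"
    by simp
  then show False
    by (simp add: LIMSEQ_const_iff)
qed

lemma two_contractions_cover:
  fixes u v \<rho> y :: real
  assumes "1/2 \<le> \<rho>" "u \<le> y" "y \<le> v"
  shows "\<exists>y'\<in>{u..v}. y = u + \<rho> * (y' - u) \<or> y = v + \<rho> * (y' - v)"
proof (cases "y \<le> u + \<rho> * (v - u)")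
  case True
  then show ?thesis
    using assms by (intro bexI[of _ "u + (y - u) / \<rho>"]) (auto simp: field_simps)
next
  case False
  have "(1 - \<rho>) * (v - u) \<le> \<rho> * (v - u)"
    using assms by (intro mult_right_mono) auto
  then show ?thesis
    using False assms by (intro bexI[of _ "v - (v - y) / \<rho>"]) (auto simp: field_simps)
qed

lemma power_contraction_cover:
  fixes c b x \<rho> :: real
  assumes "0 < \<rho>" "\<rho> < 1" "c < x" "x \<le> b"
  shows "\<exists>j. \<exists>y\<in>{c + \<rho> * (b - c)..b}. x = c + \<rho> ^ j * (y - c)"
proof -
  define P where "P j \<longleftrightarrow> \<rho> ^ Suc j * (b - c) \<le> x - c" for j
  have bc: "0 < b - c"
    using assms by simp
  obtain N where "\<rho> ^ N < (x - c) / (b - c)"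
    using real_arch_pow_inv[of "(x - c) / (b - c)" \<rho>] assms by auto
  then have "\<rho> ^ N * (b - c) < x - c"
    using bc by (simp add: less_divide_eq)
  moreover have "\<rho> ^ Suc N * (b - c) \<le> \<rho> ^ N * (b - c)"
    using assms bc power_decreasing[of N "Suc N" \<rho>] by (intro mult_right_mono) auto
  ultimately have "P N"
    unfolding P_def by linarith
  then have "P (LEAST j. P j)"
    by (rule LeastI)
  moreover have "x - c \<le> \<rho> ^ (LEAST j. P j) * (b - c)"
  proof (cases "LEAST j. P j")
    case (Suc i)
    then have "\<not> P i"
      using not_less_Least[of i P] by simp
    then show ?thesis
      using Suc by (simp add: P_def)
  qed (use assms in simp)
  ultimately show ?thesis
    using assms
    by (intro exI[of _ "LEAST j. P j"] bexI[of _ "c + (x - c) / \<rho> ^ (LEAST j. P j)"])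
      (auto simp: P_def field_simps)
qed

lemma power_contraction_cover_left:
  fixes c b x \<rho> :: real
  assumes "0 < \<rho>" "\<rho> < 1" "b \<le> x" "x < c"
  shows "\<exists>j. \<exists>y\<in>{b..c + \<rho> * (b - c)}. x = c + \<rho> ^ j * (y - c)"
proof -
  have "\<exists>j. \<exists>y\<in>{- c + \<rho> * (- b - - c)..- b}. - x = - c + \<rho> ^ j * (y - - c)"
    by (rule power_contraction_cover) (use assms in auto)
  then obtain j y where "y \<in> {- c + \<rho> * (- b - - c)..- b}" "- x = - c + \<rho> ^ j * (y - - c)"
    by blast
  then show ?thesis
    by (intro exI[of _ j] bexI[of _ "- y"]) (auto simp: algebra_simps)
qed

lemma backward_orbit:
  assumes "y0 \<in> K" and "\<And>y. y \<in> K \<Longrightarrow> \<exists>e\<in>E. \<exists>y'\<in>K. W e y' = y"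
  shows "\<exists>e z. z 0 = y0 \<and> (\<forall>t. z t \<in> K \<and> e t \<in> E \<and> W (e t) (z (Suc t)) = z t)"
proof -
  have "\<exists>z. \<forall>t. (z t \<in> K \<and> (t = 0 \<longrightarrow> z t = y0)) \<and> (\<exists>e\<in>E. W e (z (Suc t)) = z t)"
    by (rule dependent_nat_choice) (use assms in blast)+
  then obtain z where z: "\<forall>t. (z t \<in> K \<and> (t = 0 \<longrightarrow> z t = y0)) \<and> (\<exists>e\<in>E. W e (z (Suc t)) = z t)"
    by blast
  then obtain e where "\<forall>t. e t \<in> E \<and> W (e t) (z (Suc t)) = z t"
    by metis
  then show ?thesis
    using z by blast
qed

locale hIFS_interval =
  fixes lam :: real and p :: "nat \<Rightarrow> real" and n i0 i1 :: nat and m M :: real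
  assumes lam_pos: "0 < lam" and lam_less_1: "lam < 1"
    and i0: "i0 \<le> n" "p i0 = m" and i1: "i1 \<le> n" "p i1 = M"
    and p_between: "\<And>i. i \<le> n \<Longrightarrow> m \<le> p i \<and> p i \<le> M"
    and m_less_M: "m < M"
begin

abbreviation S :: "nat \<Rightarrow> real \<Rightarrow> real" where
  "S \<equiv> hIFS lam p"

lemma hIFS_eq: "S i y = p i + lam * (y - p i)"
  by (simp add: hIFS_def algebra_simps)

lemma hIFS_mem_interval:
  assumes "i \<le> n" "y \<in> {m..M}"
  shows "S i y \<in> {m..M}"
proof -
  have "lam * m + (1 - lam) * m \<le> lam * y + (1 - lam) * p i"
    "lam * y + (1 - lam) * p i \<le> lam * M + (1 - lam) * M"
    using assms p_between[of i] lam_pos lam_less_1 by (intro add_mono mult_left_mono; simp)+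
  then show ?thesis
    by (simp add: hIFS_def algebra_simps)
qed

lemma interval_preimage:
  assumes "1/2 \<le> lam" "z \<in> {m..M}"
  shows "\<exists>d\<le>n. \<exists>z'\<in>{m..M}. z = S d z'"
  using two_contractions_cover[OF assms(1), of m z M] assms i0 i1 by (auto simp: hIFS_eq)

lemma interval_iterated_preimage:
  assumes "1/2 \<le> lam" "z \<in> {m..M}"
  shows "\<exists>a z'. (\<forall>j. a j \<le> n) \<and> z' \<in> {m..M} \<and> z = comp_word S a N z'"
proof (induction N)
  case 0
  show ?case
    using assms i0 by (intro exI[of _ "\<lambda>_. i0"] exI[of _ z]) auto
next
  case (Suc N)
  then obtain a z' where a: "\<forall>j. a j \<le> n" "z' \<in> {m..M}" "z = comp_word S a N z'"
    by blast
  obtain d z'' where d: "d \<le> n" "z'' \<in> {m..M}" "z' = S d z''"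
    using interval_preimage[OF assms(1) a(2)] by blast
  have "comp_word S (a(N := d)) N = comp_word S a N"
    by (rule comp_word_cong) simp
  then have "z = comp_word S (a(N := d)) (Suc N) z''"
    using a d by simp
  moreover have "\<forall>j. (a(N := d)) j \<le> n"
    using a d by simp
  ultimately show ?case
    using d(2) by blast
qed

lemma invariant_subset_interval:
  assumes "compact X" "X \<noteq> {}" "X \<subseteq> (\<Union>i\<in>{0..n}. S i ` X)"
  shows "X \<subseteq> {m..M}"
proof -
  obtain s where s: "s \<in> X" "\<forall>x\<in>X. x \<le> s"
    using compact_attains_sup[OF assms(1,2)] by blast
  obtain s' where s': "s' \<in> X" "\<forall>x\<in>X. s' \<le> x"
    using compact_attains_inf[OF assms(1,2)] by blast
  obtain i x where ix: "i \<le> n" "x \<in> X" "s = S i x"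
    using s(1) assms(3) by auto
  obtain i' x' where ix': "i' \<le> n" "x' \<in> X" "s' = S i' x'"
    using s'(1) assms(3) by auto
  have "s \<le> lam * s + (1 - lam) * M" "lam * s' + (1 - lam) * m \<le> s'"
    using ix ix' s s' p_between[of i] p_between[of i'] lam_pos lam_less_1
    by (auto simp: hIFS_def intro!: add_mono mult_left_mono)
  then have "(1 - lam) * s \<le> (1 - lam) * M" "(1 - lam) * m \<le> (1 - lam) * s'"
    by (simp_all add: algebra_simps)
  then have "s \<le> M" "m \<le> s'"
    using lam_less_1 by (simp_all add: mult_le_cancel_left_pos)
  then show ?thesis
    using s s' by fastforce
qed

lemma interval_subset_invariant:
  assumes "1/2 \<le> lam" "closed X" "x0 \<in> X" "\<And>i x. i \<le> n \<Longrightarrow> x \<in> X \<Longrightarrow> S i x \<in> X"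
  shows "{m..M} \<subseteq> X"
proof
  fix z
  assume z: "z \<in> {m..M}"
  have word_closed: "comp_word S a N x \<in> X" if "\<forall>j. a j \<le> n" "x \<in> X" for a N x
    using that by (induction N arbitrary: x) (simp_all add: assms(4))
  define C where "C = \<bar>x0\<bar> + \<bar>m\<bar> + \<bar>M\<bar> + 1"
  have "\<exists>y\<in>X. dist y z < e" if e: "0 < e" for e
  proof -
    obtain N where N: "lam ^ N < e / C"
      using real_arch_pow_inv[of "e / C" lam] e lam_less_1 by (auto simp: C_def)
    obtain a z' where a: "\<forall>j. a j \<le> n" "z' \<in> {m..M}" "z = comp_word S a N z'"
      using interval_iterated_preimage[OF assms(1) z] by blast
    have "comp_word S a N x0 - z = lam ^ N * (x0 - z')"
      by (simp add: a(3) comp_word_hIFS algebra_simps)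
    then have "dist (comp_word S a N x0) z = lam ^ N * \<bar>x0 - z'\<bar>"
      using lam_pos by (simp add: dist_real_def abs_mult)
    also have "\<dots> \<le> lam ^ N * C"
      using a(2) lam_pos by (intro mult_left_mono) (auto simp: C_def)
    also have "\<dots> < e"
      using N by (simp add: C_def field_simps)
    finally show ?thesis
      using word_closed[OF a(1) assms(3)] by blast
  qed
  then show "z \<in> X"
    using closed_approachable[OF assms(2)] by blast
qed

lemma attractor_hIFS:
  assumes "1/2 \<le> lam"
  shows "attractor S n = {m..M}"
  unfolding attractor_def
proof (rule the_equality)
  have "{m..M} \<subseteq> (\<Union>i\<in>{0..n}. S i ` {m..M})"
  proof
    fix z
    assume "z \<in> {m..M}"
    then obtain d z' where "d \<le> n" "z' \<in> {m..M}" "z = S d z'"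
      using interval_preimage[OF assms] by blast
    then show "z \<in> (\<Union>i\<in>{0..n}. S i ` {m..M})"
      by (intro UN_I[of d] image_eqI[of z "S d" z']) auto
  qed
  moreover have "(\<Union>i\<in>{0..n}. S i ` {m..M}) \<subseteq> {m..M}"
    using hIFS_mem_interval by auto
  ultimately show "compact {m..M} \<and> {m..M} \<noteq> {} \<and> {m..M} = (\<Union>i\<in>{0..n}. S i ` {m..M})"
    using m_less_M by auto
next
  fix X
  assume X: "compact X \<and> X \<noteq> {} \<and> X = (\<Union>i\<in>{0..n}. S i ` X)"
  then have XU: "X = (\<Union>i\<in>{0..n}. S i ` X)"
    by blast
  from X obtain x0 where "x0 \<in> X"
    by blast
  moreover have "S i x \<in> X" if "i \<le> n" "x \<in> X" for i x
  proof -
    have "S i x \<in> (\<Union>i\<in>{0..n}. S i ` X)"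
      using that by (intro UN_I[of i] imageI) auto
    then show ?thesis
      using XU by simp
  qed
  ultimately have "{m..M} \<subseteq> X"
    using X compact_imp_closed by (intro interval_subset_invariant[OF assms]) auto
  moreover have "X \<subseteq> {m..M}"
    using X by (intro invariant_subset_interval) auto
  ultimately show "X = {m..M}"
    by blast
qed

lemma coding_hIFS_minus_sums:
  assumes "\<forall>j. a j \<le> n"
  shows "(\<lambda>j. (1 - lam) * lam ^ j * (p (a j) - c)) sums (coding S a - c)"
proof -
  have "(\<lambda>j. (1 - lam) * lam ^ j * p (a j) - (1 - lam) * lam ^ j * c) sums (coding S a - 1 * c)"
    using lam_pos lam_less_1
    by (intro sums_diff coding_hIFS_sums[OF assms] sums_mult2 geometric_weights_sums) auto
  then show ?thesis
    by (simp add: algebra_simps)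
qed

lemma coding_hIFS_mem_open_interval:
  assumes "\<forall>j. a j \<le> n" "a j0 = i0" "a j1 = i1"
  shows "coding S a \<in> {m<..<M}"
proof -
  have sums_pos: "0 < s" if "f sums s" "\<And>j. 0 \<le> f j" "0 < f i" for f :: "nat \<Rightarrow> real" and s i
    using suminf_pos2[OF sums_summable[OF that(1)] that(2,3)] sums_unique[OF that(1)] by simp
  have weights: "0 < (1 - lam) * lam ^ j" for j
    using lam_pos lam_less_1 by simp
  have "0 < coding S a - m"
  proof (rule sums_pos[OF coding_hIFS_minus_sums[OF assms(1)]])
    show "0 \<le> (1 - lam) * lam ^ j * (p (a j) - m)" for j
      using weights[of j] p_between assms(1) by simp
    show "0 < (1 - lam) * lam ^ j1 * (p (a j1) - m)"
      using weights[of j1] assms(3) i1 m_less_M by simp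
  qed
  moreover have "0 < - (coding S a - M)"
  proof (rule sums_pos[OF sums_minus[OF coding_hIFS_minus_sums[OF assms(1)]]])
    show "0 \<le> - ((1 - lam) * lam ^ j * (p (a j) - M))" for j
      using weights[of j] p_between assms(1) by (simp add: mult_nonneg_nonpos)
    show "0 < - ((1 - lam) * lam ^ j0 * (p (a j0) - M))"
      using weights[of j0] assms(2) i0 m_less_M by (simp add: mult_pos_neg)
  qed
  ultimately show ?thesis
    by simp
qed

end

section \<open>Simply normal codings of the interior points\<close>

locale normal_construction = hIFS_interval +
  fixes k :: nat
  assumes k_pos: "0 < k"
    and block_contraction: "1/2 < lam ^ (k * (n + 1) ^ k)"
begin

definition L :: nat where
  "L = k * (n + 1) ^ k"

definition r :: real where
  "r = lam ^ L"

(* Swapping the letters 0 and i0 makes each period start with k copies of i0, so that shifted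
   copies of the period can be concatenated without changing the window counts. *)
definition period_word :: "nat \<Rightarrow> nat" where
  "period_word x = Transposition.transpose 0 i0 (balanced_word (n + 1) k x)"

lemma L_pos: "0 < L"
  using k_pos by (simp add: L_def)

lemma k_le_L: "k \<le> L"
  by (simp add: L_def)

lemma r_bounds: "1/2 < r" "r < 1"
  using block_contraction lam_pos lam_less_1 L_pos by (simp_all add: r_def L_def power_less_one_iff)

lemma r_le_power: "s \<le> L \<Longrightarrow> r \<le> lam ^ s"
  unfolding r_def using lam_pos lam_less_1 by (intro power_decreasing) auto

lemma lam_gt_half: "1/2 < lam"
  using r_le_power[of 1] r_bounds L_pos by simp

lemma period_word_le: "period_word x \<le> n"
proof -
  have "balanced_word (n + 1) k x \<le> n"
    by (simp add: balanced_word_def digit_def less_Suc_eq_le)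
  then show ?thesis
    using i0 by (simp add: period_word_def Transposition.transpose_def)
qed

lemma period_word_periodic: "period_word (x + L) = period_word x"
  by (simp add: period_word_def L_def balanced_word_periodic)

lemma period_word_initial: "x < k \<Longrightarrow> period_word x = i0"
  by (simp add: period_word_def balanced_word_def digit_def)

lemma period_word_window_count:
  assumes "length b = k" "set b \<subseteq> {0..n}"
  shows "card {x. x < L \<and> (\<forall>i<k. period_word (x + i) = b ! i)} = k"
proof -
  define c where "c i = Transposition.transpose 0 i0 (b ! i)" for i
  have "c i < n + 1" if "i < k" for i
  proof -
    have "b ! i \<in> set b"
      using assms(1) that by simp
    then show ?thesis
      using assms(2) i0 by (auto simp: c_def Transposition.transpose_def)
  qed
  then have "card {x. x < k * (n + 1) ^ k \<and> (\<forall>i<k. balanced_word (n + 1) k (x + i) = c i)} = k"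
    by (intro balanced_word_window_count) auto
  moreover have "period_word y = b ! i \<longleftrightarrow> balanced_word (n + 1) k y = c i" for y i
    unfolding period_word_def c_def by (metis transpose_involutory)
  ultimately show ?thesis
    by (simp add: L_def)
qed

lemma period_word_hits:
  assumes "d \<le> n"
  shows "\<exists>x<L. period_word x = d"
proof -
  have "card {x. x < L \<and> (\<forall>i<k. period_word (x + i) = replicate k d ! i)} = k"
    using assms by (intro period_word_window_count) auto
  then have "{x. x < L \<and> (\<forall>i<k. period_word (x + i) = replicate k d ! i)} \<noteq> {}"
    using k_pos by (metis card.empty less_irrefl)
  then obtain x where "x < L" "\<forall>i<k. period_word (x + i) = replicate k d ! i"
    by blast
  then show ?thesis
    using k_pos by (metis add_0_right nth_replicate)
qed

definition block_map :: "nat \<Rightarrow> real \<Rightarrow> real" where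
  "block_map e = comp_word S (\<lambda>s. period_word (s + e)) L"

definition fixpoint :: "nat \<Rightarrow> real" where
  "fixpoint e = block_map e 0 / (1 - r)"

lemma block_map_eq: "block_map e y = fixpoint e + r * (y - fixpoint e)"
proof -
  have "(1 - r) * fixpoint e = block_map e 0"
    using r_bounds by (simp add: fixpoint_def)
  moreover have "block_map e y = r * y + block_map e 0"
    by (simp add: block_map_def r_def comp_word_hIFS)
  ultimately show ?thesis
    by (simp add: algebra_simps)
qed

lemma block_map_conj: "block_map 0 (S i0 y) = S i0 (block_map 1 y)"
proof -
  obtain L' where L': "L = Suc L'"
    using L_pos not0_implies_Suc by blast
  have "period_word L = i0"
    using period_word_periodic[of 0] period_word_initial k_pos by simp
  then have "block_map 1 y = comp_word S (\<lambda>s. period_word (Suc s)) L' (S i0 y)"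
    by (simp add: block_map_def L')
  moreover have "block_map 0 = S (period_word 0) \<circ> comp_word S (\<lambda>s. period_word (Suc s)) L'"
    using comp_word_add[of S "\<lambda>s. period_word s" 1 L'] by (simp add: block_map_def L')
  ultimately show ?thesis
    using period_word_initial k_pos by simp
qed

lemma fixpoint_0_eq: "fixpoint 0 = S i0 (fixpoint 1)"
proof -
  have "block_map 1 (fixpoint 1) = fixpoint 1"
    by (simp add: block_map_eq)
  then have "block_map 0 (S i0 (fixpoint 1)) = S i0 (fixpoint 1)"
    by (simp add: block_map_conj)
  then have "r * (S i0 (fixpoint 1) - fixpoint 0) = S i0 (fixpoint 1) - fixpoint 0"
    unfolding block_map_eq[of 0] by argo
  then show ?thesis
    using r_bounds by simp
qed

lemma fixpoint_minus_eq_sum: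
  "(1 - r) * (fixpoint e - c) = (\<Sum>s<L. (1 - lam) * lam ^ s * (p (period_word (s + e)) - c))"
proof -
  have "(\<Sum>s<L. (1 - lam) * lam ^ s * c) = (\<Sum>s<L. (1 - lam) * lam ^ s) * c"
    by (simp add: sum_distrib_right)
  also have "\<dots> = (1 - r) * c"
    by (simp add: r_def one_diff_power_eq sum_distrib_left)
  finally have "(\<Sum>s<L. (1 - lam) * lam ^ s * (p (period_word (s + e)) - c)) = block_map e 0 - (1 - r) * c"
    by (simp add: block_map_def comp_word_hIFS right_diff_distrib sum_subtractf)
  moreover have "block_map e 0 = (1 - r) * fixpoint e"
    using r_bounds by (simp add: fixpoint_def)
  ultimately show ?thesis
    by (simp add: right_diff_distrib)
qed

lemma fixpoint_1_gt: "m + (1 - lam) * (M - m) < fixpoint 1"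
proof -
  obtain x where x: "x < L" "period_word x = i1"
    using period_word_hits i1 by blast
  have "x \<noteq> 0"
  proof
    assume "x = 0"
    then have "i1 = i0"
      using x period_word_initial k_pos by simp
    then show False
      using i0 i1 m_less_M by simp
  qed
  then obtain s0 where s0: "s0 < L" "period_word (s0 + 1) = i1"
    using x by (metis Suc_eq_plus1 Suc_lessD not0_implies_Suc)
  define f where "f s = (1 - lam) * lam ^ s * (p (period_word (s + 1)) - m)" for s
  have "(1 - lam) * (M - m) * r \<le> f s0"
    using s0 i1 r_le_power[of s0] lam_less_1 m_less_M by (simp add: f_def mult_left_mono)
  also have "\<dots> \<le> (\<Sum>s<L. f s)"
    using s0 period_word_le p_between lam_pos lam_less_1
    by (intro member_le_sum) (auto simp: f_def)
  also have "\<dots> = (1 - r) * (fixpoint 1 - m)"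
    by (simp add: f_def fixpoint_minus_eq_sum)
  finally have "(1 - lam) * (M - m) * r \<le> (1 - r) * (fixpoint 1 - m)" .
  moreover have "(1 - lam) * (M - m) * (1 - r) < (1 - lam) * (M - m) * r"
    using r_bounds lam_less_1 m_less_M by (intro mult_strict_left_mono) auto
  ultimately have "(1 - r) * ((1 - lam) * (M - m)) < (1 - r) * (fixpoint 1 - m)"
    by (simp add: algebra_simps)
  then show ?thesis
    using r_bounds by (simp add: mult_less_cancel_left_pos)
qed

lemma block_maps_cover:
  assumes "y \<in> {fixpoint 0..fixpoint 1}"
  shows "\<exists>e\<in>{..1}. \<exists>y'\<in>{fixpoint 0..fixpoint 1}. block_map e y' = y"
  using two_contractions_cover[of r "fixpoint 0" y "fixpoint 1"] r_bounds assms
  by (auto simp: block_map_eq)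

definition block_sequence :: "(nat \<Rightarrow> nat) \<Rightarrow> nat \<Rightarrow> nat" where
  "block_sequence e j = period_word (j + e (j div L))"

lemma period_word_periodic_mult: "period_word (x + t * L) = period_word x"
proof (induction t)
  case (Suc t)
  have "x + Suc t * L = (x + t * L) + L"
    by simp
  then show ?case
    using Suc period_word_periodic by metis
qed simp

lemma block_sequence_block:
  assumes "s < L"
  shows "block_sequence e (t * L + s) = period_word (s + e t)"
proof -
  have "(t * L + s) div L = t"
    using assms by simp
  then show ?thesis
    using period_word_periodic_mult[of "s + e t" t] by (simp add: block_sequence_def ac_simps)
qed

lemma comp_word_block_sequence:
  assumes "\<forall>t. block_map (e t) (z (Suc t)) = z t"
  shows "comp_word S (block_sequence e) (t * L) (z t) = z 0"
proof (induction t)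
  case (Suc t)
  have "comp_word S (\<lambda>j. block_sequence e (t * L + j)) L = block_map (e t)"
    unfolding block_map_def by (rule comp_word_cong) (simp add: block_sequence_block)
  then have "comp_word S (block_sequence e) (t * L + L) (z (Suc t)) = comp_word S (block_sequence e) (t * L) (z t)"
    using assms by (simp add: comp_word_add)
  then show ?case
    using Suc by (simp add: add.commute)
qed simp

lemma block_sequence_window:
  assumes "\<forall>t. e t \<le> 1" "s < L" "i < k"
  shows "block_sequence e (t * L + s + i) = period_word (s + e t + i)"
proof (cases "s + i < L")
  case True
  then show ?thesis
    using block_sequence_block[of "s + i" e t] by (simp add: ac_simps)
next
  case False
  define d where "d = s + i - L"
  have d: "d + 1 < k" "t * L + s + i = Suc t * L + d" "s + e t + i = d + e t + L"
    using assms False by (simp_all add: d_def)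
  have "d + e t < k" "d + e (Suc t) < k"
    using d(1) assms(1)[rule_format, of t] assms(1)[rule_format, of "Suc t"] by linarith+
  moreover have "d < L"
    using d(1) k_le_L by simp
  ultimately have "block_sequence e (Suc t * L + d) = period_word (d + e t + L)"
    by (simp only: block_sequence_block period_word_periodic period_word_initial)
  then show ?thesis
    by (simp only: d(2,3))
qed

definition prefixed :: "nat \<Rightarrow> (nat \<Rightarrow> nat) \<Rightarrow> (nat \<Rightarrow> nat) \<Rightarrow> nat \<Rightarrow> nat" where
  "prefixed N0 u e j = (if j < N0 then u j else block_sequence e (j - N0))"

lemma simply_normal_prefixed:
  assumes "\<forall>t. e t \<le> 1"
  shows "simply_normal n k (prefixed N0 u e)"
  unfolding simply_normal_def block_count_def
proof (intro allI impI)
  fix b :: "nat list"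
  assume b: "length b = k \<and> set b \<subseteq> {0..n}"
  define P where "P x \<longleftrightarrow> (\<forall>i<k. period_word (x + i) = b ! i)" for x
  have "card {s. s < L \<and> (\<forall>i<length b. prefixed N0 u e (N0 + t * L + s + i) = b ! i)} = k" for t
  proof -
    have "prefixed N0 u e (N0 + t * L + s + i) = period_word (s + e t + i)" if "s < L" "i < k" for s i
      using block_sequence_window[OF assms that] by (simp add: prefixed_def add.assoc)
    then have "{s. s < L \<and> (\<forall>i<length b. prefixed N0 u e (N0 + t * L + s + i) = b ! i)}
        = {s. s < L \<and> P (s + e t)}"
      using b by (auto simp: P_def)
    also have "card \<dots> = card {s. s < L \<and> P s}"
    proof (rule card_periodic_shift)
      have "period_word (x + L + i) = period_word (x + i)" for x i
        using period_word_periodic[of "x + i"] by (simp add: ac_simps)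
      then show "\<forall>x. P (x + L) = P x"
        by (simp add: P_def)
    qed
    also have "\<dots> = k"
      using period_word_window_count b by (simp add: P_def)
    finally show ?thesis .
  qed
  then have "(\<lambda>m. real (card {j. j < m \<and> (\<forall>i<length b. prefixed N0 u e (j + i) = b ! i)}) / real m)
      \<longlonglongrightarrow> real k / real L"
    by (intro density_of_periodic_counts[of L _ N0] L_pos) (simp add: add.assoc)
  moreover have "real k / real L = 1 / real (n + 1) ^ k"
    using k_pos by (simp add: L_def)
  ultimately show "(\<lambda>m. real (card {j. j < m \<and> (\<forall>i<length b. prefixed N0 u e (j + i) = b ! i)}) / real m)
      \<longlonglongrightarrow> 1 / real (n + 1) ^ k"
    by simp
qed

lemma coding_prefixed:
  assumes u: "\<forall>j<N0. u j \<le> n" and z: "\<forall>t. z t \<in> {fixpoint 0..fixpoint 1}"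
    and orbit: "\<forall>t. block_map (e t) (z (Suc t)) = z t"
  shows "coding S (prefixed N0 u e) = comp_word S u N0 (z 0)"
proof -
  have digits: "\<forall>j. prefixed N0 u e j \<le> n"
    using u period_word_le by (simp add: prefixed_def block_sequence_def)
  have eq: "comp_word S (prefixed N0 u e) (N0 + t * L) (z t) = comp_word S u N0 (z 0)" for t
  proof -
    have "comp_word S (prefixed N0 u e) N0 = comp_word S u N0"
      by (rule comp_word_cong) (simp add: prefixed_def)
    moreover have "(\<lambda>j. prefixed N0 u e (N0 + j)) = block_sequence e"
      by (simp add: prefixed_def)
    ultimately show ?thesis
      using comp_word_block_sequence[OF orbit] by (simp add: comp_word_add)
  qed
  have "strict_mono (\<lambda>t. N0 + t * L)"
    using L_pos by (intro strict_monoI) simp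
  moreover have "\<forall>t. \<bar>z t\<bar> \<le> \<bar>fixpoint 0\<bar> + \<bar>fixpoint 1\<bar>"
  proof
    fix t
    have "fixpoint 0 \<le> z t" "z t \<le> fixpoint 1"
      using z by auto
    then show "\<bar>z t\<bar> \<le> \<bar>fixpoint 0\<bar> + \<bar>fixpoint 1\<bar>"
      using abs_ge_self[of "fixpoint 1"] abs_ge_minus_self[of "fixpoint 0"] abs_ge_zero[of "fixpoint 0"]
        abs_ge_zero[of "fixpoint 1"] unfolding abs_le_iff by linarith
  qed
  ultimately have "(\<lambda>t. comp_word S (prefixed N0 u e) (N0 + t * L) (z t))
      \<longlonglongrightarrow> coding S (prefixed N0 u e)"
    using comp_word_hIFS_tendsto_coding[OF digits less_imp_le[OF lam_pos] lam_less_1] by blast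
  then have "(\<lambda>t. comp_word S u N0 (z 0)) \<longlonglongrightarrow> coding S (prefixed N0 u e)"
    by (simp only: eq)
  then show ?thesis
    by (simp add: LIMSEQ_const_iff)
qed

lemma reach_from_fixpoint_interval:
  assumes "x \<in> {m<..<M}"
  shows "\<exists>j1 j0. \<exists>y\<in>{fixpoint 0..fixpoint 1}.
    x = comp_word S (\<lambda>_. i1) j1 (comp_word S (\<lambda>_. i0) j0 y)"
proof -
  obtain j1 z where z: "m < z" "z \<le> fixpoint 1" "x = M + lam ^ j1 * (z - M)"
  proof (cases "x \<le> fixpoint 1")
    case True
    then show ?thesis
      using that[of x 0] assms by simp
  next
    case False
    define b where "b = M - (M - fixpoint 1) / lam"
    have "M - fixpoint 1 < lam * (M - m)"
      using fixpoint_1_gt by (simp add: algebra_simps)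
    then have "m < b"
      using lam_pos by (simp add: b_def field_simps)
    moreover have "b \<le> x"
    proof -
      have "(M - fixpoint 1) * lam \<le> (M - fixpoint 1) * 1"
        using False assms lam_less_1 by (intro mult_left_mono) auto
      then have "M - fixpoint 1 \<le> (M - fixpoint 1) / lam"
        using lam_pos by (simp add: le_divide_eq)
      then show ?thesis
        using False by (simp add: b_def)
    qed
    moreover have "M + lam * (b - M) = fixpoint 1"
      using lam_pos by (simp add: b_def)
    moreover have "\<exists>j. \<exists>y\<in>{b..M + lam * (b - M)}. x = M + lam ^ j * (y - M)"
      using \<open>b \<le> x\<close> assms lam_pos lam_less_1 by (intro power_contraction_cover_left) auto
    then obtain j y where "y \<in> {b..M + lam * (b - M)}" "x = M + lam ^ j * (y - M)"
      by blast
    ultimately show ?thesis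
      using that[of y j] by simp
  qed
  have "m + lam * (fixpoint 1 - m) = fixpoint 0"
    using fixpoint_0_eq i0 by (simp add: hIFS_eq)
  moreover have "\<exists>j. \<exists>y\<in>{m + lam * (fixpoint 1 - m)..fixpoint 1}. z = m + lam ^ j * (y - m)"
    using z lam_pos lam_less_1 by (intro power_contraction_cover) auto
  ultimately obtain j0 y where "y \<in> {fixpoint 0..fixpoint 1}" "z = m + lam ^ j0 * (y - m)"
    by metis
  then show ?thesis
    using z i0 i1 by (intro exI bexI[of _ y]) (auto simp: comp_word_hIFS_const)
qed

lemma simply_normal_coding_exists:
  assumes x: "x \<in> {m<..<M}"
  shows "\<exists>a. (\<forall>j. a j \<le> n) \<and> simply_normal n k a \<and> coding S a = x"
proof -
  obtain j1 j0 y where y: "y \<in> {fixpoint 0..fixpoint 1}"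
    and xy: "x = comp_word S (\<lambda>_. i1) j1 (comp_word S (\<lambda>_. i0) j0 y)"
    using reach_from_fixpoint_interval[OF x] by blast
  obtain e z where z0: "z 0 = y"
    and orbit: "\<forall>t. z t \<in> {fixpoint 0..fixpoint 1} \<and> e t \<in> {..1}
      \<and> block_map (e t) (z (Suc t)) = z t"
    using backward_orbit[of y "{fixpoint 0..fixpoint 1}" "{..1}" block_map] y block_maps_cover by blast
  then have z: "\<forall>t. z t \<in> {fixpoint 0..fixpoint 1}" and e: "\<forall>t. e t \<le> 1"
    and step: "\<forall>t. block_map (e t) (z (Suc t)) = z t"
    by simp_all
  define u where "u j = (if j < j1 then i1 else i0)" for j
  have "comp_word S u (j1 + j0) y = x"
  proof -
    have "comp_word S u j1 = comp_word S (\<lambda>_. i1) j1"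
      by (rule comp_word_cong) (simp add: u_def)
    moreover have "comp_word S (\<lambda>j. u (j1 + j)) j0 = comp_word S (\<lambda>_. i0) j0"
      by (rule comp_word_cong) (simp add: u_def)
    ultimately show ?thesis
      by (simp add: xy comp_word_add)
  qed
  moreover have "\<forall>j<j1 + j0. u j \<le> n"
    using i0 i1 by (simp add: u_def)
  ultimately have "coding S (prefixed (j1 + j0) u e) = x"
    using coding_prefixed[OF _ z step] z0 by simp
  moreover have "simply_normal n k (prefixed (j1 + j0) u e)"
    using e by (rule simply_normal_prefixed)
  moreover have "\<forall>j. prefixed (j1 + j0) u e j \<le> n"
    using i0 i1 period_word_le by (simp add: prefixed_def block_sequence_def u_def)
  ultimately show ?thesis
    by blast
qed

theorem Xk_eq_open_interval: "Xk S n k = {m<..<M}"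
proof
  show "Xk S n k \<subseteq> {m<..<M}"
  proof
    fix x
    assume "x \<in> Xk S n k"
    then obtain a where a: "\<forall>j. a j \<le> n" "simply_normal n k a" "coding S a = x"
      by (auto simp: Xk_def)
    then have "\<exists>j. a j = i0" "\<exists>j. a j = i1"
      using simply_normal_digit_occurs k_pos i0 i1 by blast+
    then show "x \<in> {m<..<M}"
      using coding_hIFS_mem_open_interval[OF a(1)] a(3) by blast
  qed
  show "{m<..<M} \<subseteq> Xk S n k"
    using simply_normal_coding_exists attractor_hIFS lam_gt_half by (auto simp: Xk_def)
qed

end

lemma exists_extreme_points:
  fixes p :: "nat \<Rightarrow> real"
  assumes "\<exists>i\<le>n. \<exists>j\<le>n. p i \<noteq> p j"
  obtains i0 i1 where "i0 \<le> n" "i1 \<le> n" "p i0 < p i1"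
    "\<And>i. i \<le> n \<Longrightarrow> p i0 \<le> p i \<and> p i \<le> p i1"
proof -
  have fin: "finite (p ` {0..n})"
    by simp
  have "Min (p ` {0..n}) \<in> p ` {0..n}" "Max (p ` {0..n}) \<in> p ` {0..n}"
    using fin by (intro Min_in Max_in; simp)+
  then obtain i0 i1 where i0: "Min (p ` {0..n}) = p i0" "i0 \<in> {0..n}"
    and i1: "Max (p ` {0..n}) = p i1" "i1 \<in> {0..n}"
    by blast
  have between: "p i0 \<le> p i \<and> p i \<le> p i1" if "i \<le> n" for i
  proof -
    have "p i \<in> p ` {0..n}"
      using that by simp
    then show ?thesis
      using Min_le[OF fin] Max_ge[OF fin] i0(1) i1(1) by metis
  qed
  moreover have "p i0 < p i1"
  proof (rule ccontr)
    obtain i j where "i \<le> n" "j \<le> n" "p i \<noteq> p j"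
      using assms by blast
    moreover assume "\<not> p i0 < p i1"
    ultimately show False
      using between[of i] between[of j] by linarith
  qed
  ultimately show ?thesis
    using i0(2) i1(2) by (intro that) auto
qed

lemma power_gt_of_powr_root_less:
  fixes a x :: real
  assumes "0 < a" "0 < N" "a powr (1 / real N) < x"
  shows "a < x ^ N"
proof -
  have "(a powr (1 / real N)) ^ N < x ^ N"
    using assms by (intro power_strict_mono) auto
  moreover have "(a powr (1 / real N)) ^ N = a"
    using assms by (simp add: powr_realpow[symmetric] powr_powr)
  ultimately show ?thesis
    by simp
qed

theorem theorem6p2:
  fixes p :: "nat \<Rightarrow> real" and n k :: nat and lam :: real
  assumes "\<exists>i\<le>n. \<exists>j\<le>n. p i \<noteq> p j"
    and "k \<ge> 1"
    and "max ((1/2) powr (1 / (real k * real (n + 1) ^ k))) (pisot_theta powr (-1/2)) < lam"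
    and "lam < 1"
  shows "Xk (hIFS lam p) n k = interior (attractor (hIFS lam p) n)"
proof -
  obtain i0 i1 where "i0 \<le> n" "i1 \<le> n" "p i0 < p i1"
    "\<And>i. i \<le> n \<Longrightarrow> p i0 \<le> p i \<and> p i \<le> p i1"
    using exists_extreme_points[OF assms(1)] by blast
  moreover have root: "(1/2) powr (1 / real (k * (n + 1) ^ k)) < lam"
    using assms(3) by simp
  then have "1/2 < lam ^ (k * (n + 1) ^ k)"
    using assms(2) by (intro power_gt_of_powr_root_less) auto
  moreover have "0 < lam"
    using root powr_gt_zero[of "1/2" "1 / real (k * (n + 1) ^ k)"] by linarith
  ultimately interpret normal_construction lam p n i0 i1 "p i0" "p i1" k
    using assms(2,4) by unfold_locales auto
  show ?thesis
    using Xk_eq_open_interval attractor_hIFS lam_gt_half by simp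
qed

end
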